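(* Let $X$ be a finite set, $G\le S_X$, $f\in N_{S_X}(G)$ and $\Gamma=\Gamma_r(G,f)$. Let $\bar f$ be the permutation of the set of $G$-orbits induced by $f$ (mapping $wG$ to $(wf)G$). Then: (i) $\Gamma$ is an $|X/G|$-partite digraph with parts $\{C_G(G_x):x\in X/G\}$; (ii) for $x,z\in X/G$, there exists an edge from $C_G(G_z)$ to $C_G(G_x)$ if and only if $\bar f$ maps $zG$ to $xG$; (iii) the digraph on $X/G$ obtained from $\Gamma$ by collapsing every vertex set $C_G(G_x)$ into a single vertex is a disjoint union of directed cycles, namely the cycle decomposition of $\bar f$; (iv) every vertex of $\Gamma$ has indegree $1$ and outdegree $1$, so $\Gamma$ is a union of disjoint directed cycles.
   Context: Permutations act on the right ($xf$ is the image of $x$ under $f$; $fg$ means $f$ first, then $g$); $g^f=f^{-1}gf$. For $G\le S_X$, $xG$ is the orbit of $x$, $G_x$ its stabilizer, $X/G$ a fixed complete set of orbit representatives; $C_G(H)$ is the centralizer and $N_{S_X}(G)$ the normalizer. For every $y\in X$ fix $g_y\in G$ with $xg_y=y$, where $x$ is the representative in $X/G$ of the orbit of $y$. The digraph (possibly with loops) $\Gamma_r(G,f)$, for $f\in N_{S_X}(G)$, has vertex set the formally disjoint union of the sets $C_G(G_x)$, $x\in X/G$; for $x,z\in X/G$, $\kappa_x\in C_G(G_x)$ and $\lambda_z\in C_G(G_z)$, there is a directed edge $\lambda_z\to\kappa_x$ if and only if, with $y=xf^{-1}$, we have $z=yg_y^{-1}$ and $\kappa_x=((\lambda_z)^{g_y})^f$.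 *)

theory Defs
  imports "HOL-Combinatorics.Permutations"
begin

text \<open>Permutations act on the right: the image of x under g is written g x here;
  the product fg (f first, then g) is the function g \<circ> f.\<close>

definition perm_group :: "'a set \<Rightarrow> ('a \<Rightarrow> 'a) set \<Rightarrow> bool" where
  "perm_group X G \<longleftrightarrow> (\<forall>g\<in>G. g permutes X) \<and> id \<in> G \<and>
     (\<forall>g\<in>G. \<forall>h\<in>G. g \<circ> h \<in> G) \<and> (\<forall>g\<in>G. inv g \<in> G)"

text \<open>Right conjugation g^f = f^{-1} g f (apply f^{-1}, then g, then f).\<close>
definition conjp :: "('a \<Rightarrow> 'a) \<Rightarrow> ('a \<Rightarrow> 'a) \<Rightarrow> ('a \<Rightarrow> 'a)" where
  "conjp g f = f \<circ> g \<circ> inv f"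

definition normalizer :: "'a set \<Rightarrow> ('a \<Rightarrow> 'a) set \<Rightarrow> ('a \<Rightarrow> 'a) set" where
  "normalizer X G = {f. f permutes X \<and> (\<lambda>g. conjp g f) ` G = G}"

definition orbit :: "('a \<Rightarrow> 'a) set \<Rightarrow> 'a \<Rightarrow> 'a set" where
  "orbit G x = (\<lambda>g. g x) ` G"

definition orbits :: "'a set \<Rightarrow> ('a \<Rightarrow> 'a) set \<Rightarrow> 'a set set" where
  "orbits X G = orbit G ` X"

definition stab :: "('a \<Rightarrow> 'a) set \<Rightarrow> 'a \<Rightarrow> ('a \<Rightarrow> 'a) set" where
  "stab G x = {g\<in>G. g x = x}"

definition centralizer :: "('a \<Rightarrow> 'a) set \<Rightarrow> ('a \<Rightarrow> 'a) set \<Rightarrow> ('a \<Rightarrow> 'a) set" where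
  "centralizer G H = {g\<in>G. \<forall>h\<in>H. g \<circ> h = h \<circ> g}"

definition orbit_reps :: "'a set \<Rightarrow> ('a \<Rightarrow> 'a) set \<Rightarrow> 'a set \<Rightarrow> bool" where
  "orbit_reps X G R \<longleftrightarrow> R \<subseteq> X \<and> (\<forall>y\<in>X. \<exists>!x. x \<in> R \<and> orbit G x = orbit G y)"

definition rep :: "('a \<Rightarrow> 'a) set \<Rightarrow> 'a set \<Rightarrow> 'a \<Rightarrow> 'a" where
  "rep G R y = (THE x. x \<in> R \<and> orbit G x = orbit G y)"

definition transversal_choice :: "'a set \<Rightarrow> ('a \<Rightarrow> 'a) set \<Rightarrow> 'a set \<Rightarrow> ('a \<Rightarrow> ('a \<Rightarrow> 'a)) \<Rightarrow> bool" where
  "transversal_choice X G R gy \<longleftrightarrow> (\<forall>y\<in>X. gy y \<in> G \<and> gy y (rep G R y) = y)"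

text \<open>Vertices of Gamma_r(G,f): the disjoint union of the C_G(G_x), x in R, as tagged pairs.\<close>
definition gamma_V :: "('a \<Rightarrow> 'a) set \<Rightarrow> 'a set \<Rightarrow> ('a \<times> ('a \<Rightarrow> 'a)) set" where
  "gamma_V G R = Sigma R (\<lambda>x. centralizer G (stab G x))"

definition gamma_E :: "('a \<Rightarrow> 'a) set \<Rightarrow> 'a set \<Rightarrow> ('a \<Rightarrow> ('a \<Rightarrow> 'a)) \<Rightarrow> ('a \<Rightarrow> 'a)
    \<Rightarrow> ('a \<times> ('a \<Rightarrow> 'a)) \<Rightarrow> ('a \<times> ('a \<Rightarrow> 'a)) \<Rightarrow> bool" where
  "gamma_E G R gy f u v \<longleftrightarrow> u \<in> gamma_V G R \<and> v \<in> gamma_V G R \<and>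
     (let z = fst u; lam = snd u; x = fst v; kap = snd v; y = inv f x
      in z = inv (gy y) y \<and> kap = conjp (conjp lam (gy y)) f)"

end

theory Submission
  imports Defs
begin

text \<open>Conjugation by a permutation p normalising G carries G-orbits to G-orbits,
  \<open>y G\<close> to \<open>(y p) G\<close>, and centralisers of point stabilisers to centralisers of
  point stabilisers, \<open>C\<^sub>G(G\<^sub>y)\<close> onto \<open>C\<^sub>G(G\<^sub>y\<^sub>p)\<close>; both f and the elements
  of G are such permutations. Consequently the edge condition of \<open>\<Gamma>\<^sub>r(G,f)\<close>
  prescribes exactly one out-neighbour for each vertex \<open>\<lambda>\<^sub>z\<close>: it lies in the part
  of the representative x of \<open>(zf)G\<close> and equals \<open>((\<lambda>\<^sub>z)\<^bsup>g\<^sub>y\<^esup>)\<^sup>f\<close> with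
  \<open>y = xf\<^sup>-\<^sup>1\<close>, because \<open>g\<^sub>y\<close> maps z to y. Since conjugation is injective, this
  successor map is injective, hence a permutation of the finite vertex set, and on
  parts it is the permutation of X/G induced by f.\<close>

lemma perm_group_bij: "perm_group X G \<Longrightarrow> g \<in> G \<Longrightarrow> bij g"
  by (meson perm_group_def permutes_bij)

lemma conjp_apply: "bij p \<Longrightarrow> conjp g p (p x) = p (g x)"
  by (simp add: conjp_def bij_is_inj inv_f_f)

lemma conjp_comp: "bij p \<Longrightarrow> conjp (g \<circ> h) p = conjp g p \<circ> conjp h p"
  by (simp add: conjp_def fun_eq_iff bij_is_inj inv_f_f)

lemma inj_conjp: "bij p \<Longrightarrow> inj (\<lambda>g. conjp g p)"
  by (rule injI, rule ext) (metis conjp_apply bij_is_inj injD)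

lemma conjp_conjp_inv: "bij p \<Longrightarrow> conjp (conjp g (inv p)) p = g"
  by (simp add: conjp_def inv_inv_eq fun_eq_iff bij_is_surj surj_f_inv_f)

lemma perm_group_conjp_image:
  assumes "perm_group X G" and "g \<in> G"
  shows "(\<lambda>h. conjp h g) ` G = G"
proof
  show "(\<lambda>h. conjp h g) ` G \<subseteq> G"
    using assms by (auto simp: perm_group_def conjp_def)
  show "G \<subseteq> (\<lambda>h. conjp h g) ` G"
  proof
    fix h assume "h \<in> G"
    then have "conjp h (inv g) \<in> G"
      using assms by (simp add: perm_group_def conjp_def inv_inv_eq permutes_bij)
    moreover have "h = conjp (conjp h (inv g)) g"
      using assms by (simp add: conjp_conjp_inv perm_group_bij)
    ultimately show "h \<in> (\<lambda>h. conjp h g) ` G" by blast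
  qed
qed

lemma orbit_apply_conjp:
  assumes "bij p" and "(\<lambda>h. conjp h p) ` G = G"
  shows "orbit G (p a) = p ` orbit G a"
proof -
  have "orbit G (p a) = (\<lambda>h. conjp h p (p a)) ` G"
    unfolding orbit_def by (subst (1) assms(2)[symmetric]) (simp add: image_image)
  also have "\<dots> = p ` orbit G a"
    using assms(1) by (simp add: orbit_def conjp_apply image_image)
  finally show ?thesis .
qed

lemma orbit_apply_conjp_eq_iff:
  assumes "bij p" and "(\<lambda>h. conjp h p) ` G = G"
  shows "orbit G (p a) = orbit G (p b) \<longleftrightarrow> orbit G a = orbit G b"
  using assms by (simp add: orbit_apply_conjp inj_image_eq_iff bij_is_inj)

lemma conjp_mem_centralizer_stab:
  assumes p: "bij p" and p_norm: "(\<lambda>h. conjp h p) ` G = G"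
    and lam: "lam \<in> centralizer G (stab G x)"
  shows "conjp lam p \<in> centralizer G (stab G (p x))"
proof -
  have "conjp lam p \<circ> h = h \<circ> conjp lam p" if "h \<in> stab G (p x)" for h
  proof -
    obtain k where k: "k \<in> G" "h = conjp k p"
      using \<open>h \<in> stab G (p x)\<close> p_norm by (auto simp: stab_def)
    have "p (k x) = p x"
      using that k conjp_apply[OF p, of k x] by (simp add: stab_def)
    then have "k \<in> stab G x"
      using k(1) p by (simp add: stab_def bij_is_inj inj_eq)
    then have "lam \<circ> k = k \<circ> lam"
      using lam by (simp add: centralizer_def)
    then show ?thesis
      using k(2) by (simp add: conjp_comp[OF p, symmetric])
  qed
  moreover have "conjp lam p \<in> G"
    using lam p_norm by (auto simp: centralizer_def)
  ultimately show ?thesis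
    by (simp add: centralizer_def)
qed

lemma
  assumes "orbit_reps X G R" and "y \<in> X"
  shows rep_mem: "rep G R y \<in> R" and orbit_rep: "orbit G (rep G R y) = orbit G y"
  using theI'[of "\<lambda>x. x \<in> R \<and> orbit G x = orbit G y"] assms
  unfolding orbit_reps_def rep_def by auto

lemma rep_eq_iff:
  assumes "orbit_reps X G R" and "z \<in> R" and "y \<in> X"
  shows "rep G R y = z \<longleftrightarrow> orbit G z = orbit G y"
proof
  show "rep G R y = z \<Longrightarrow> orbit G z = orbit G y"
    using orbit_rep[OF assms(1,3)] by simp
  have "\<exists>!x. x \<in> R \<and> orbit G x = orbit G y"
    using assms(1,3) by (simp add: orbit_reps_def)
  then show "orbit G z = orbit G y \<Longrightarrow> rep G R y = z"
    unfolding rep_def using assms(2) by (blast intro: the1_equality)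
qed

lemma inj_on_orbit_reps:
  assumes "orbit_reps X G R"
  shows "inj_on (orbit G) R"
proof
  fix a b assume "a \<in> R" "b \<in> R" "orbit G a = orbit G b"
  moreover have "b \<in> X"
    using assms \<open>b \<in> R\<close> by (auto simp: orbit_reps_def)
  ultimately have "rep G R b = a" and "rep G R b = b"
    using rep_eq_iff[OF assms] by blast+
  then show "a = b" by simp
qed

lemma bij_betw_orbit_reps:
  assumes "orbit_reps X G R"
  shows "bij_betw (orbit G) R (orbits X G)"
proof (rule bij_betw_imageI)
  show "inj_on (orbit G) R"
    using assms by (rule inj_on_orbit_reps)
  have "orbit G y \<in> orbit G ` R" if "y \<in> X" for y
    using rep_mem[OF assms that] orbit_rep[OF assms that] by (metis image_eqI)
  then show "orbit G ` R = orbits X G"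
    using assms by (auto simp: orbits_def orbit_reps_def)
qed

lemma permutes_graph_degrees:
  assumes "\<pi> permutes V" and "\<forall>u\<in>V. \<forall>w\<in>V. E u w \<longleftrightarrow> \<pi> u = w" and "v \<in> V"
  shows "card {u\<in>V. E u v} = 1" and "card {w\<in>V. E v w} = 1"
proof -
  have "{u\<in>V. E u v} = {inv \<pi> v}"
    using assms by (auto simp: permutes_inv_eq permutes_in_image permutes_inv permutes_inverses)
  then show "card {u\<in>V. E u v} = 1" by simp
  have "{w\<in>V. E v w} = {\<pi> v}"
    using assms by (auto simp: permutes_in_image)
  then show "card {w\<in>V. E v w} = 1" by simp
qed

locale gamma_r_digraph =
  fixes X :: "'a set" and G :: "('a \<Rightarrow> 'a) set" and f :: "'a \<Rightarrow> 'a"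
    and R :: "'a set" and gy :: "'a \<Rightarrow> ('a \<Rightarrow> 'a)"
  assumes finite_X: "finite X" and group: "perm_group X G"
    and f_normalizer: "f \<in> normalizer X G"
    and reps: "orbit_reps X G R" and transversal: "transversal_choice X G R gy"
begin

lemma f_permutes: "f permutes X"
  using f_normalizer by (simp add: normalizer_def)

lemma f_bij: "bij f"
  using f_permutes by (rule permutes_bij)

lemma conjp_f_image: "(\<lambda>h. conjp h f) ` G = G"
  using f_normalizer by (simp add: normalizer_def)

lemma R_subset: "R \<subseteq> X"
  using reps by (simp add: orbit_reps_def)

lemma finite_R: "finite R"
  using R_subset finite_X by (rule finite_subset)

lemma inv_f_mem: "x \<in> R \<Longrightarrow> inv f x \<in> X"
  using R_subset permutes_inv[OF f_permutes] by (auto simp: permutes_in_image)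

lemma
  assumes "y \<in> X"
  shows gy_mem: "gy y \<in> G" and gy_rep: "gy y (rep G R y) = y"
  using transversal assms by (auto simp: transversal_choice_def)

lemma inv_gy: "y \<in> X \<Longrightarrow> inv (gy y) y = rep G R y"
  using gy_rep gy_mem perm_group_bij[OF group] by (metis bij_inv_eq_iff)

text \<open>The permutation \<open>wG \<mapsto> (wf)G\<close> of X/G, transported to the representatives R.\<close>
definition induced_perm :: "'a \<Rightarrow> 'a" where
  "induced_perm z = (if z \<in> R then rep G R (f z) else z)"

lemma induced_perm_mem: "z \<in> R \<Longrightarrow> induced_perm z \<in> R"
  using R_subset f_permutes rep_mem[OF reps] by (auto simp: induced_perm_def permutes_in_image)

lemma induced_perm_eq_iff:
  assumes "z \<in> R" and "x \<in> R"
  shows "induced_perm z = x \<longleftrightarrow> orbit G (f z) = orbit G x"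
  using assms R_subset f_permutes rep_eq_iff[OF reps \<open>x \<in> R\<close>, of "f z"]
  by (auto simp: induced_perm_def permutes_in_image)

lemma orbit_induced_perm: "z \<in> R \<Longrightarrow> orbit G (induced_perm z) = orbit G (f z)"
  using induced_perm_eq_iff induced_perm_mem by metis

lemma rep_inv_f_eq_iff:
  assumes "z \<in> R" and "x \<in> R"
  shows "rep G R (inv f x) = z \<longleftrightarrow> induced_perm z = x"
proof -
  have "rep G R (inv f x) = z \<longleftrightarrow> orbit G z = orbit G (inv f x)"
    using rep_eq_iff[OF reps assms(1) inv_f_mem[OF assms(2)]] .
  also have "\<dots> \<longleftrightarrow> orbit G (f z) = orbit G x"
    using orbit_apply_conjp_eq_iff[OF f_bij conjp_f_image, of z "inv f x"]
    by (simp add: permutes_inverses[OF f_permutes])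
  finally show ?thesis
    using induced_perm_eq_iff[OF assms] by simp
qed

lemma induced_perm_permutes: "induced_perm permutes R"
proof (rule bij_imp_permutes)
  have "inj_on induced_perm R"
  proof
    fix a b assume "a \<in> R" "b \<in> R" "induced_perm a = induced_perm b"
    then have "orbit G (f a) = orbit G (f b)"
      by (metis orbit_induced_perm)
    then have "orbit G a = orbit G b"
      using orbit_apply_conjp_eq_iff[OF f_bij conjp_f_image] by blast
    then show "a = b"
      using inj_on_orbit_reps[OF reps] \<open>a \<in> R\<close> \<open>b \<in> R\<close> by (simp add: inj_on_eq_iff)
  qed
  moreover have "induced_perm ` R = R"
    using endo_inj_surj[OF finite_R _ \<open>inj_on induced_perm R\<close>] induced_perm_mem by blast
  ultimately show "bij_betw induced_perm R R"
    by (simp add: bij_betw_def)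
qed (simp add: induced_perm_def)

definition successor :: "'a \<times> ('a \<Rightarrow> 'a) \<Rightarrow> 'a \<times> ('a \<Rightarrow> 'a)" where
  "successor u = (if u \<in> gamma_V G R then
     (let x = induced_perm (fst u) in (x, conjp (conjp (snd u) (gy (inv f x))) f))
   else u)"

lemma gamma_E_iff_successor:
  assumes "u \<in> gamma_V G R" and "v \<in> gamma_V G R"
  shows "gamma_E G R gy f u v \<longleftrightarrow> successor u = v"
proof -
  obtain z lam x kap where uv: "u = (z, lam)" "v = (x, kap)"
    by (cases u, cases v)
  then have "z \<in> R" and "x \<in> R"
    using assms by (auto simp: gamma_V_def)
  then have "inv (gy (inv f x)) (inv f x) = z \<longleftrightarrow> induced_perm z = x"
    using inv_gy[OF inv_f_mem] rep_inv_f_eq_iff by simp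
  then show ?thesis
    using assms uv by (auto simp: gamma_E_def successor_def Let_def)
qed

lemma successor_mem:
  assumes "u \<in> gamma_V G R"
  shows "successor u \<in> gamma_V G R"
proof -
  obtain z lam where u: "u = (z, lam)" and z: "z \<in> R"
    and lam: "lam \<in> centralizer G (stab G z)"
    using assms by (auto simp: gamma_V_def)
  define x where "x = induced_perm z"
  define y where "y = inv f x"
  have x: "x \<in> R"
    using induced_perm_mem[OF z] by (simp add: x_def)
  have y: "y \<in> X"
    using inv_f_mem[OF x] by (simp add: y_def)
  have "gy y z = y"
    using gy_rep[OF y] rep_inv_f_eq_iff[OF z x] by (simp add: x_def y_def)
  then have "conjp lam (gy y) \<in> centralizer G (stab G y)"
    using conjp_mem_centralizer_stab[OF perm_group_bij[OF group gy_mem[OF y]]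
        perm_group_conjp_image[OF group gy_mem[OF y]] lam] by simp
  then have "conjp (conjp lam (gy y)) f \<in> centralizer G (stab G x)"
    using conjp_mem_centralizer_stab[OF f_bij conjp_f_image]
    by (metis y_def permutes_inverses(1)[OF f_permutes])
  then show ?thesis
    using u assms x by (simp add: successor_def gamma_V_def Let_def x_def y_def)
qed

lemma inj_on_successor: "inj_on successor (gamma_V G R)"
proof
  fix u v assume u: "u \<in> gamma_V G R" and v: "v \<in> gamma_V G R"
    and eq: "successor u = successor v"
  obtain z lam z' lam' where uv: "u = (z, lam)" "v = (z', lam')"
    by (cases u, cases v)
  have "induced_perm z = induced_perm z'"
    using eq u v uv by (simp add: successor_def Let_def)
  then have "z = z'"
    using permutes_inj[OF induced_perm_permutes] by (simp add: inj_eq)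
  define g where "g = gy (inv f (induced_perm z))"
  have "g \<in> G"
    using u uv by (auto simp: g_def gamma_V_def intro: gy_mem inv_f_mem induced_perm_mem)
  have "conjp (conjp lam g) f = conjp (conjp lam' g) f"
    using eq u v uv \<open>z = z'\<close> by (simp add: successor_def Let_def g_def)
  then have "lam = lam'"
    by (simp add: inj_eq[OF inj_conjp[OF f_bij]]
        inj_eq[OF inj_conjp[OF perm_group_bij[OF group \<open>g \<in> G\<close>]]])
  then show "u = v"
    using uv \<open>z = z'\<close> by simp
qed

lemma finite_gamma_V: "finite (gamma_V G R)"
proof (rule finite_subset)
  show "gamma_V G R \<subseteq> R \<times> {p. p permutes X}"
    using group by (auto simp: gamma_V_def centralizer_def perm_group_def)
  show "finite (R \<times> {p. p permutes X})"
    using finite_R finite_permutations[OF finite_X] by blast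
qed

lemma successor_permutes: "successor permutes gamma_V G R"
proof (rule bij_imp_permutes)
  have "successor ` gamma_V G R = gamma_V G R"
    using endo_inj_surj[OF finite_gamma_V _ inj_on_successor] successor_mem by blast
  then show "bij_betw successor (gamma_V G R) (gamma_V G R)"
    using inj_on_successor by (simp add: bij_betw_def)
qed (simp add: successor_def)

lemma gamma_E_between_parts_iff:
  assumes "x \<in> R" and "z \<in> R"
  shows "(\<exists>lam kap. gamma_E G R gy f (z, lam) (x, kap)) \<longleftrightarrow> induced_perm z = x"
proof
  assume "\<exists>lam kap. gamma_E G R gy f (z, lam) (x, kap)"
  then obtain lam kap where E: "gamma_E G R gy f (z, lam) (x, kap)"
    by blast
  then have "(z, lam) \<in> gamma_V G R" and "(x, kap) \<in> gamma_V G R"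
    by (simp_all add: gamma_E_def)
  then show "induced_perm z = x"
    using E gamma_E_iff_successor by (auto simp: successor_def Let_def)
next
  assume "induced_perm z = x"
  have "id \<in> centralizer G (stab G z)"
    using group by (simp add: centralizer_def perm_group_def)
  then have u: "(z, id) \<in> gamma_V G R"
    using assms by (simp add: gamma_V_def)
  then have "successor (z, id) = (x, snd (successor (z, id)))"
    using \<open>induced_perm z = x\<close> by (simp add: successor_def Let_def)
  then have "gamma_E G R gy f (z, id) (x, snd (successor (z, id)))"
    using gamma_E_iff_successor[OF u] successor_mem[OF u] by metis
  then show "\<exists>lam kap. gamma_E G R gy f (z, lam) (x, kap)"
    by blast
qed

end

theorem proposition5p1:
  fixes X :: "'a set" and G :: "('a \<Rightarrow> 'a) set" and f :: "'a \<Rightarrow> 'a"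
    and R :: "'a set" and gy :: "'a \<Rightarrow> ('a \<Rightarrow> 'a)"
  assumes "finite X" and "perm_group X G" and "f \<in> normalizer X G"
    and "orbit_reps X G R" and "transversal_choice X G R gy"
  defines "V \<equiv> gamma_V G R" and "E \<equiv> gamma_E G R gy f"
  shows
    \<comment> \<open>(i) partition into card(X/G) parts C_G(G_x)\<close>
    "(V = (\<Union>x\<in>R. {x} \<times> centralizer G (stab G x)) \<and>
     (\<forall>x\<in>R. centralizer G (stab G x) \<noteq> {}) \<and>
     card R = card (orbits X G)) \<and>
    \<comment> \<open>(ii)\<close>
    (\<forall>x\<in>R. \<forall>z\<in>R.
       (\<exists>lam kap. E (z, lam) (x, kap)) \<longleftrightarrow> orbit G (f z) = orbit G x) \<and>
    \<comment> \<open>(iii) collapsed digraph = functional graph of the induced permutation on X/G\<close>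
    (\<exists>\<sigma>. \<sigma> permutes R \<and> (\<forall>z\<in>R. orbit G (f z) = orbit G (\<sigma> z)) \<and>
        (\<forall>x\<in>R. \<forall>z\<in>R. (\<exists>lam kap. E (z, lam) (x, kap)) \<longleftrightarrow> \<sigma> z = x)) \<and>
    \<comment> \<open>(iv)\<close>
    (\<forall>v\<in>V. card {u\<in>V. E u v} = 1 \<and> card {w\<in>V. E v w} = 1) \<and>
    (\<exists>\<pi>. \<pi> permutes V \<and> (\<forall>u\<in>V. \<forall>v\<in>V. E u v \<longleftrightarrow> \<pi> u = v))"
proof -
  interpret gamma_r_digraph X G f R gy
    using assms(1-5) by unfold_locales
  have edges: "\<forall>x\<in>R. \<forall>z\<in>R. (\<exists>lam kap. E (z, lam) (x, kap)) \<longleftrightarrow> induced_perm z = x"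
    using gamma_E_between_parts_iff by (simp add: E_def)
  have successor: "\<forall>u\<in>V. \<forall>v\<in>V. E u v \<longleftrightarrow> successor u = v"
    using gamma_E_iff_successor by (simp add: V_def E_def)
  have "V = (\<Union>x\<in>R. {x} \<times> centralizer G (stab G x))"
    by (auto simp: V_def gamma_V_def)
  moreover have "\<forall>x\<in>R. centralizer G (stab G x) \<noteq> {}"
    using assms(2) by (auto simp: centralizer_def perm_group_def)
  moreover have "card R = card (orbits X G)"
    using bij_betw_orbit_reps[OF assms(4)] by (rule bij_betw_same_card)
  moreover have "\<forall>x\<in>R. \<forall>z\<in>R. (\<exists>lam kap. E (z, lam) (x, kap)) \<longleftrightarrow> orbit G (f z) = orbit G x"
    using edges induced_perm_eq_iff by simp
  moreover have "\<forall>z\<in>R. orbit G (f z) = orbit G (induced_perm z)"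
    using orbit_induced_perm by simp
  moreover have "\<forall>v\<in>V. card {u\<in>V. E u v} = 1 \<and> card {w\<in>V. E v w} = 1"
    using permutes_graph_degrees[OF successor_permutes] successor by (simp add: V_def)
  ultimately show ?thesis
    using induced_perm_permutes edges successor_permutes successor by (auto simp: V_def)
qed

end
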